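(* Let $(A_n)_{n\in\mathbb Z^+}$ be a sequence of invertible linear operators on $\mathbb R^d$ that admits a strong exponential dichotomy with respect to a sequence of norms $\|\cdot\|_n$, $n\in\mathbb Z^+$, and projections $P_n$, $n\in\mathbb Z^+$. Let $(P_n')_{n\in\mathbb Z^+}$ be projections on $\mathbb R^d$ with $P'_{n+1}A_n=A_nP'_n$ for all $n\in\mathbb Z^+$. Then $(A_n)_{n\in\mathbb Z^+}$ admits a strong exponential dichotomy with respect to the norms $\|\cdot\|_n$ and projections $P'_n$ if and only if $\operatorname{Im}P_0=\operatorname{Im}P_0'$.
   Context: $\mathbb Z^+=\{0,1,\dots\}$. $\mathcal A(m,n)=A_{m-1}\cdots A_n$ ($m>n$), $\mathrm{Id}$ ($m=n$), $A_m^{-1}\cdots A_{n-1}^{-1}$ ($m<n$). Strong exponential dichotomy w.r.t. norms $\{\|\cdot\|_n\}$ and projections $P_n$: $A_nP_n=P_{n+1}A_n$ for all $n$, and there exist $K>0$, $a\ge\lambda>0$ with, for $m\ge n$, $x\in\mathbb R^d$, $Q_m=\mathrm{Id}-P_m$: $\|\mathcal A(m,n)P_nx\|_m\le Ke^{-\lambda(m-n)}\|x\|_n$, $\|\mathcal A(n,m)Q_mx\|_n\le Ke^{-\lambda(m-n)}\|x\|_m$, $\|\mathcal A(m,n)x\|_m\le Ke^{a(m-n)}\|x\|_n$, $\|\mathcal A(n,m)x\|_n\le Ke^{a(m-n)}\|x\|_m$. *)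

theory Defs
  imports "HOL-Analysis.Analysis"
begin

fun fwd_prod :: "(nat \<Rightarrow> real^'d^'d) \<Rightarrow> nat \<Rightarrow> nat \<Rightarrow> real^'d^'d" where
  "fwd_prod A n 0 = mat 1"
| "fwd_prod A n (Suc k) = A (n + k) ** fwd_prod A n k"

fun bwd_prod :: "(nat \<Rightarrow> real^'d^'d) \<Rightarrow> nat \<Rightarrow> nat \<Rightarrow> real^'d^'d" where
  "bwd_prod A m 0 = mat 1"
| "bwd_prod A m (Suc k) = bwd_prod A m k ** matrix_inv (A (m + k))"

definition cocycle :: "(nat \<Rightarrow> real^'d^'d) \<Rightarrow> nat \<Rightarrow> nat \<Rightarrow> real^'d^'d" where
  "cocycle A m n = (if n \<le> m then fwd_prod A n (m - n) else bwd_prod A m (n - m))"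

definition is_norm_on :: "(real^'d \<Rightarrow> real) \<Rightarrow> bool" where
  "is_norm_on N \<longleftrightarrow>
     (\<forall>x. 0 \<le> N x) \<and> (\<forall>x. N x = 0 \<longleftrightarrow> x = 0) \<and>
     (\<forall>c x. N (c *\<^sub>R x) = \<bar>c\<bar> * N x) \<and> (\<forall>x y. N (x + y) \<le> N x + N y)"

definition is_projection :: "real^'d^'d \<Rightarrow> bool" where
  "is_projection P \<longleftrightarrow> P ** P = P"

definition strong_exp_dichotomy ::
  "(nat \<Rightarrow> real^'d^'d) \<Rightarrow> (nat \<Rightarrow> real^'d \<Rightarrow> real) \<Rightarrow> (nat \<Rightarrow> real^'d^'d) \<Rightarrow> bool" where
  "strong_exp_dichotomy A N P \<longleftrightarrow>
     (\<forall>n. A n ** P n = P (Suc n) ** A n) \<and>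
     (\<exists>K a lam :: real. K > 0 \<and> lam > 0 \<and> a \<ge> lam \<and>
        (\<forall>m n x. n \<le> m \<longrightarrow>
           N m (cocycle A m n *v (P n *v x)) \<le> K * exp (- lam * real (m - n)) * N n x \<and>
           N n (cocycle A n m *v ((mat 1 - P m) *v x)) \<le> K * exp (- lam * real (m - n)) * N m x \<and>
           N m (cocycle A m n *v x) \<le> K * exp (a * real (m - n)) * N n x \<and>
           N n (cocycle A n m *v x) \<le> K * exp (a * real (m - n)) * N m x))"

end

theory Submission
  imports Defs
begin

text \<open>If both P and P' give dichotomies and y \<in> Im P_0, then
  (I - P'_0) y = \<A>(0,m) (I - P'_m) \<A>(m,0) y for every m; the unstable estimate for P' and
  the stable estimate for P bound this by a multiple of exp(-\<lambda>' m), so y \<in> Im P'_0, and the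
  converse inclusion holds by symmetry. Conversely, equal images give P_0 P'_0 = P'_0 and
  P'_0 P_0 = P_0, and conjugation by the cocycle carries these identities to every n. Then
  P'_n - P_n = \<A>(n,0) P_0 (P'_0 - P_0) \<A>(0,n) (I - P_n) is bounded uniformly in n, because
  both outer factors are bounded by K, and the estimates for P' follow from those for P through
  \<A>(m,n) P'_n = \<A>(m,n) P_n P'_n and \<A>(n,m) (I - P'_m) = (I - P'_n) \<A>(n,m) (I - P_m).\<close>

section \<open>Matrix cocycles\<close>

lemma invertible_matrix_inv:
  assumes "invertible (B::'a::semiring_1^'n^'n)"
  shows "B ** matrix_inv B = mat 1" "matrix_inv B ** B = mat 1"
proof -
  have "\<exists>B'. B ** B' = mat 1 \<and> B' ** B = mat 1" using assms unfolding invertible_def .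
  from someI_ex[OF this] show "B ** matrix_inv B = mat 1" "matrix_inv B ** B = mat 1"
    unfolding matrix_inv_def by auto
qed

lemma matrix_mul_diff_ldistrib: "(A::'a::ring_1^'n^'m) ** (B - C) = A ** B - A ** C"
  by (vector matrix_matrix_mult_def sum_subtractf right_diff_distrib)

lemma matrix_mul_diff_rdistrib: "((A::'a::ring_1^'n^'m) - B) ** C = A ** C - B ** C"
  by (vector matrix_matrix_mult_def sum_subtractf left_diff_distrib)

lemma fwd_prod_intertwines:
  assumes "\<And>n. A n ** R n = R (Suc n) ** A n"
  shows "R (n + k) ** fwd_prod A n k = fwd_prod A n k ** R n"
proof (induction k)
  case 0 then show ?case by simp
next
  case (Suc k)
  have "R (n + Suc k) ** fwd_prod A n (Suc k) = (R (Suc (n + k)) ** A (n + k)) ** fwd_prod A n k"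
    by (simp add: matrix_mul_assoc)
  also have "\<dots> = A (n + k) ** (R (n + k) ** fwd_prod A n k)"
    by (simp add: assms[symmetric] matrix_mul_assoc)
  also have "\<dots> = fwd_prod A n (Suc k) ** R n" using Suc by (simp add: matrix_mul_assoc)
  finally show ?case .
qed

lemma bwd_prod_intertwines:
  assumes "\<And>n. A n ** R n = R (Suc n) ** A n" and "\<And>n. invertible (A n)"
  shows "bwd_prod A n k ** R (n + k) = R n ** bwd_prod A n k"
proof (induction k)
  case 0 then show ?case by simp
next
  case (Suc k)
  have inv_intertwines: "matrix_inv (A j) ** R (Suc j) = R j ** matrix_inv (A j)" for j
  proof -
    have "matrix_inv (A j) ** R (Suc j) = matrix_inv (A j) ** R (Suc j) ** (A j ** matrix_inv (A j))"
      using invertible_matrix_inv[OF assms(2)] by simp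
    also have "\<dots> = matrix_inv (A j) ** (R (Suc j) ** A j) ** matrix_inv (A j)"
      by (simp add: matrix_mul_assoc)
    also have "\<dots> = (matrix_inv (A j) ** A j) ** R j ** matrix_inv (A j)"
      by (simp add: assms(1)[symmetric] matrix_mul_assoc)
    finally show ?thesis using invertible_matrix_inv[OF assms(2)] by simp
  qed
  have "bwd_prod A n (Suc k) ** R (n + Suc k)
      = bwd_prod A n k ** (matrix_inv (A (n + k)) ** R (Suc (n + k)))"
    by (simp add: matrix_mul_assoc)
  also have "\<dots> = (bwd_prod A n k ** R (n + k)) ** matrix_inv (A (n + k))"
    by (simp add: inv_intertwines matrix_mul_assoc)
  also have "\<dots> = R n ** bwd_prod A n (Suc k)" using Suc by (simp add: matrix_mul_assoc)
  finally show ?case .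
qed

lemma fwd_prod_bwd_prod_inverse:
  assumes "\<And>n. invertible (A n)"
  shows "fwd_prod A n k ** bwd_prod A n k = mat 1" "bwd_prod A n k ** fwd_prod A n k = mat 1"
proof (induction k)
  case 0
  show "fwd_prod A n 0 ** bwd_prod A n 0 = mat 1" "bwd_prod A n 0 ** fwd_prod A n 0 = mat 1"
    by simp_all
next
  case (Suc k)
  have "fwd_prod A n (Suc k) ** bwd_prod A n (Suc k)
      = A (n + k) ** (fwd_prod A n k ** bwd_prod A n k) ** matrix_inv (A (n + k))"
    by (simp add: matrix_mul_assoc)
  then show "fwd_prod A n (Suc k) ** bwd_prod A n (Suc k) = mat 1"
    using Suc(1) invertible_matrix_inv[OF assms] by simp
  have "bwd_prod A n (Suc k) ** fwd_prod A n (Suc k)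
      = bwd_prod A n k ** (matrix_inv (A (n + k)) ** A (n + k)) ** fwd_prod A n k"
    by (simp add: matrix_mul_assoc)
  then show "bwd_prod A n (Suc k) ** fwd_prod A n (Suc k) = mat 1"
    using Suc(2) invertible_matrix_inv[OF assms] by simp
qed

lemma cocycle_forward: "n \<le> m \<Longrightarrow> cocycle A m n = fwd_prod A n (m - n)"
  by (simp add: cocycle_def)

lemma cocycle_backward: "n \<le> m \<Longrightarrow> cocycle A n m = bwd_prod A n (m - n)"
  by (cases "m = n") (auto simp: cocycle_def)

lemma cocycle_same [simp]: "cocycle A n n = mat 1"
  by (simp add: cocycle_def)

lemma cocycle_inverse:
  assumes "\<And>n. invertible (A n)"
  shows "cocycle A m n ** cocycle A n m = mat 1"
proof (cases "n \<le> m")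
  case True
  then show ?thesis
    using fwd_prod_bwd_prod_inverse(1)[OF assms] by (simp add: cocycle_forward cocycle_backward)
next
  case False
  then show ?thesis
    using fwd_prod_bwd_prod_inverse(2)[OF assms] by (simp add: cocycle_forward cocycle_backward)
qed

lemma cocycle_intertwines:
  assumes "\<And>n. A n ** R n = R (Suc n) ** A n" and "\<And>n. invertible (A n)"
  shows "R m ** cocycle A m n = cocycle A m n ** R n"
proof (cases "n \<le> m")
  case True
  then show ?thesis
    using fwd_prod_intertwines[of A R, OF assms(1), of n "m - n"] by (simp add: cocycle_forward)
next
  case False
  then show ?thesis
    using bwd_prod_intertwines[of A R, OF assms, of m "n - m"] by (simp add: cocycle_backward)
qed

lemma cocycle_intertwines_complement:
  assumes "\<And>n. A n ** R n = R (Suc n) ** A n" and "\<And>n. invertible (A n)"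
  shows "(mat 1 - R m) ** cocycle A m n = cocycle A m n ** (mat 1 - R n)"
  using cocycle_intertwines[of A R, OF assms, of m n]
  by (simp add: matrix_mul_diff_ldistrib matrix_mul_diff_rdistrib)

lemma cocycle_conjugate:
  assumes "\<And>n. A n ** R n = R (Suc n) ** A n" and "\<And>n. invertible (A n)"
  shows "R m = cocycle A m n ** R n ** cocycle A n m"
proof -
  have "R m = R m ** (cocycle A m n ** cocycle A n m)"
    using cocycle_inverse[OF assms(2)] by simp
  also have "\<dots> = cocycle A m n ** R n ** cocycle A n m"
    by (simp add: matrix_mul_assoc cocycle_intertwines[of A R, OF assms])
  finally show ?thesis .
qed

section \<open>Norms on finite-dimensional space\<close>

lemma is_norm_on_nonneg: "is_norm_on N \<Longrightarrow> 0 \<le> N x"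
  and is_norm_on_eq_0_iff: "is_norm_on N \<Longrightarrow> N x = 0 \<longleftrightarrow> x = 0"
  and is_norm_on_scaleR: "is_norm_on N \<Longrightarrow> N (c *\<^sub>R x) = \<bar>c\<bar> * N x"
  and is_norm_on_triangle: "is_norm_on N \<Longrightarrow> N (x + y) \<le> N x + N y"
  by (simp_all add: is_norm_on_def)

lemma is_norm_on_zero: "is_norm_on N \<Longrightarrow> N 0 = 0"
  by (simp add: is_norm_on_def)

lemma is_norm_on_minus: "is_norm_on N \<Longrightarrow> N (- x) = N x"
  using is_norm_on_scaleR[of N "- 1" x] by simp

lemma is_norm_on_diff: "is_norm_on N \<Longrightarrow> N (x - y) \<le> N x + N y"
  using is_norm_on_triangle[of N x "- y"] is_norm_on_minus[of N y] by simp

lemma is_norm_on_abs_diff_le: "is_norm_on N \<Longrightarrow> \<bar>N x - N y\<bar> \<le> N (x - y)"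
  using is_norm_on_triangle[of N y "x - y"] is_norm_on_triangle[of N x "y - x"]
    is_norm_on_minus[of N "x - y"] by simp

lemma is_norm_on_sum_le:
  assumes "is_norm_on N"
  shows "N (sum f S) \<le> (\<Sum>i\<in>S. N (f i))"
proof (induction S rule: infinite_finite_induct)
  case (insert a S)
  then show ?case using is_norm_on_triangle[OF assms, of "f a" "sum f S"] by simp
qed (simp_all add: is_norm_on_zero[OF assms])

lemma is_norm_on_le_norm:
  fixes N :: "real^'d \<Rightarrow> real"
  assumes "is_norm_on N"
  obtains M where "M \<ge> 0" "\<And>x. N x \<le> M * norm x"
proof
  let ?M = "\<Sum>i\<in>UNIV. N (axis i 1)"
  show "0 \<le> ?M" using is_norm_on_nonneg[OF assms] by (simp add: sum_nonneg)
  fix x :: "real^'d"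
  have "N x = N (\<Sum>i\<in>UNIV. (x$i) *\<^sub>R axis i 1)"
    using basis_expansion[of x] by (simp add: scalar_mult_eq_scaleR)
  also have "\<dots> \<le> (\<Sum>i\<in>UNIV. N ((x$i) *\<^sub>R axis i 1))" by (rule is_norm_on_sum_le[OF assms])
  also have "\<dots> = (\<Sum>i\<in>UNIV. \<bar>x$i\<bar> * N (axis i 1))" by (simp add: is_norm_on_scaleR[OF assms])
  also have "\<dots> \<le> (\<Sum>i\<in>UNIV. norm x * N (axis i 1))"
    by (intro sum_mono mult_right_mono component_le_norm_cart is_norm_on_nonneg[OF assms])
  finally show "N x \<le> ?M * norm x" by (simp add: sum_distrib_left mult.commute)
qed

lemma norm_le_is_norm_on:
  fixes N :: "real^'d \<Rightarrow> real"
  assumes "is_norm_on N"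
  obtains c where "c > 0" "\<And>x. c * norm x \<le> N x"
proof -
  obtain M where M: "M \<ge> 0" "\<And>x. N x \<le> M * norm x" using is_norm_on_le_norm[OF assms] by blast
  have "M-lipschitz_on (sphere 0 1) N"
  proof (rule lipschitz_onI)
    fix x y :: "real^'d"
    have "\<bar>N x - N y\<bar> \<le> M * norm (x - y)"
      using is_norm_on_abs_diff_le[OF assms] M(2) order_trans by blast
    then show "dist (N x) (N y) \<le> M * dist x y" by (simp add: dist_norm dist_real_def)
  qed (rule M(1))
  then have "continuous_on (sphere 0 1) N" by (rule lipschitz_on_continuous_on)
  moreover have "sphere (0::real^'d) 1 \<noteq> {}" by simp
  ultimately obtain x0 where x0: "x0 \<in> sphere 0 1" "\<And>y. y \<in> sphere 0 1 \<Longrightarrow> N x0 \<le> N y"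
    using continuous_attains_inf[OF compact_sphere] by blast
  show ?thesis
  proof
    show "N x0 > 0"
      using x0(1) is_norm_on_nonneg[OF assms, of x0] is_norm_on_eq_0_iff[OF assms, of x0]
      by fastforce
    fix x :: "real^'d"
    show "N x0 * norm x \<le> N x"
    proof (cases "x = 0")
      case False
      have "N x0 \<le> N ((1 / norm x) *\<^sub>R x)" using False by (intro x0(2)) simp
      also have "\<dots> = N x / norm x" by (simp add: is_norm_on_scaleR[OF assms])
      finally show ?thesis using False by (simp add: field_simps)
    qed (simp add: is_norm_on_zero[OF assms])
  qed
qed

lemma is_norm_on_matrix_bounded:
  fixes N :: "real^'d \<Rightarrow> real" and S :: "real^'d^'d"
  assumes "is_norm_on N"
  obtains C where "C \<ge> 0" "\<And>x. N (S *v x) \<le> C * N x"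
proof -
  obtain M where M: "M \<ge> 0" "\<And>x. N x \<le> M * norm x" using is_norm_on_le_norm[OF assms] by blast
  obtain c where c: "c > 0" "\<And>x. c * norm x \<le> N x" using norm_le_is_norm_on[OF assms] by blast
  obtain B where B: "B > 0" "\<And>x. norm (S *v x) \<le> norm x * B"
    using bounded_linear.pos_bounded[OF matrix_vector_mul_bounded_linear] by blast
  show ?thesis
  proof
    show "0 \<le> M * B / c" using M c B by simp
    fix x
    have "N (S *v x) \<le> M * (norm x * B)" using M B by (meson mult_left_mono order_trans)
    also have "\<dots> = (M * B / c) * (c * norm x)" using c by simp
    also have "\<dots> \<le> (M * B / c) * N x" using M c B by (intro mult_left_mono) simp_all
    finally show "N (S *v x) \<le> M * B / c * N x" .
  qed
qed

section \<open>Changing the projections of a dichotomy\<close>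

lemma strong_exp_dichotomyE:
  assumes "strong_exp_dichotomy A N P"
  obtains K a lam where "\<And>n. A n ** P n = P (Suc n) ** A n" "K > 0" "lam > 0" "a \<ge> lam"
    "\<And>m n x. n \<le> m \<Longrightarrow>
      N m (cocycle A m n *v (P n *v x)) \<le> K * exp (- lam * real (m - n)) * N n x"
    "\<And>m n x. n \<le> m \<Longrightarrow>
      N n (cocycle A n m *v ((mat 1 - P m) *v x)) \<le> K * exp (- lam * real (m - n)) * N m x"
    "\<And>m n x. n \<le> m \<Longrightarrow> N m (cocycle A m n *v x) \<le> K * exp (a * real (m - n)) * N n x"
    "\<And>m n x. n \<le> m \<Longrightarrow> N n (cocycle A n m *v x) \<le> K * exp (a * real (m - n)) * N m x"
  using assms unfolding strong_exp_dichotomy_def by blast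

lemma nonpos_if_exp_decay_bound:
  fixes v C lam :: real
  assumes "lam > 0" "\<And>m::nat. v \<le> C * exp (- lam * real m)"
  shows "v \<le> 0"
proof -
  have "(\<lambda>m. C * exp (- lam) ^ m) \<longlonglongrightarrow> C * 0"
    using assms(1) by (intro tendsto_mult tendsto_const LIMSEQ_power_zero) simp
  moreover have "v \<le> C * exp (- lam) ^ m" for m
    using assms(2)[of m] by (simp add: exp_of_nat_mult[symmetric] mult.commute)
  ultimately show ?thesis
    using LIMSEQ_le_const by fastforce
qed

lemma strong_exp_dichotomy_range_subset:
  fixes A P P' :: "nat \<Rightarrow> real^'d^'d" and N :: "nat \<Rightarrow> real^'d \<Rightarrow> real"
  assumes inv: "\<And>n. invertible (A n)" and nrm: "\<And>n. is_norm_on (N n)"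
    and "strong_exp_dichotomy A N P" and "strong_exp_dichotomy A N P'"
  shows "range (\<lambda>x. P 0 *v x) \<subseteq> range (\<lambda>x. P' 0 *v x)"
proof
  fix y assume "y \<in> range (\<lambda>x. P 0 *v x)"
  then obtain x where y: "y = P 0 *v x" by blast
  obtain K lam where K: "K > 0" "lam > 0" and stable:
    "\<And>m n x. n \<le> m \<Longrightarrow> N m (cocycle A m n *v (P n *v x)) \<le> K * exp (- lam * real (m - n)) * N n x"
    using strong_exp_dichotomyE[OF assms(3)] by metis
  obtain K' lam' where intertw': "\<And>n. A n ** P' n = P' (Suc n) ** A n" and K': "K' > 0" "lam' > 0"
    and unstable': "\<And>m n x. n \<le> m \<Longrightarrow>
      N n (cocycle A n m *v ((mat 1 - P' m) *v x)) \<le> K' * exp (- lam' * real (m - n)) * N m x"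
    using strong_exp_dichotomyE[OF assms(4)] by metis
  have "N 0 ((mat 1 - P' 0) *v y) \<le> 0"
  proof (rule nonpos_if_exp_decay_bound[OF K'(2)])
    fix m :: nat
    have "(mat 1 - P' 0) *v y = ((mat 1 - P' 0) ** cocycle A 0 m ** cocycle A m 0) *v y"
      using cocycle_inverse[OF inv] by (simp add: matrix_mul_assoc[symmetric])
    also have "\<dots> = (cocycle A 0 m ** (mat 1 - P' m) ** cocycle A m 0) *v y"
      by (simp only: cocycle_intertwines_complement[of A P', OF intertw' inv])
    also have "\<dots> = cocycle A 0 m *v ((mat 1 - P' m) *v (cocycle A m 0 *v y))"
      by (simp add: matrix_vector_mul_assoc matrix_mul_assoc)
    finally have "N 0 ((mat 1 - P' 0) *v y)
        \<le> K' * exp (- lam' * real m) * N m (cocycle A m 0 *v y)"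
      using unstable'[of 0 m] by simp
    also have "\<dots> \<le> K' * exp (- lam' * real m) * (K * exp (- lam * real m) * N 0 x)"
      using stable[of 0 m x] y K' by (intro mult_left_mono) auto
    also have "\<dots> \<le> K' * exp (- lam' * real m) * (K * N 0 x)"
      using K K' is_norm_on_nonneg[OF nrm] by (intro mult_left_mono mult_right_mono) auto
    finally show "N 0 ((mat 1 - P' 0) *v y) \<le> (K' * K * N 0 x) * exp (- lam' * real m)"
      by (simp add: mult_ac)
  qed
  then have "(mat 1 - P' 0) *v y = 0"
    using is_norm_on_nonneg[OF nrm] is_norm_on_eq_0_iff[OF nrm] by (meson order.antisym)
  then have "y = P' 0 *v y" by (simp add: matrix_vector_mult_diff_rdistrib)
  then show "y \<in> range (\<lambda>x. P' 0 *v x)" by blast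
qed

lemma projection_mult_eq_if_range_subset:
  fixes P Q :: "real^'d^'d"
  assumes "is_projection P" and "range (\<lambda>x. Q *v x) \<subseteq> range (\<lambda>x. P *v x)"
  shows "P ** Q = Q"
proof (subst matrix_eq, intro allI)
  fix x
  obtain z where z: "Q *v x = P *v z" using assms(2) by blast
  then have "(P ** Q) *v x = P *v (P *v z)" by (simp add: matrix_vector_mul_assoc[symmetric])
  also have "\<dots> = Q *v x"
    using assms(1) z by (simp add: is_projection_def matrix_vector_mul_assoc)
  finally show "(P ** Q) *v x = Q *v x" .
qed

lemma cocycle_propagates_mult_eq:
  fixes A R S :: "nat \<Rightarrow> real^'d^'d"
  assumes "\<And>n. A n ** R n = R (Suc n) ** A n" and "\<And>n. A n ** S n = S (Suc n) ** A n"
    and inv: "\<And>n. invertible (A n)" and "R 0 ** S 0 = S 0"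
  shows "R n ** S n = S n"
proof -
  have "R n ** S n
      = cocycle A n 0 ** R 0 ** (cocycle A 0 n ** cocycle A n 0) ** S 0 ** cocycle A 0 n"
    by (simp add: cocycle_conjugate[of A R, OF assms(1) inv, of n 0]
        cocycle_conjugate[of A S, OF assms(2) inv, of n 0] matrix_mul_assoc)
  also have "\<dots> = cocycle A n 0 ** S 0 ** cocycle A 0 n"
    by (simp add: cocycle_inverse[OF inv] assms(4) matrix_mul_assoc[symmetric])
  also have "\<dots> = S n" by (rule cocycle_conjugate[of A S, OF assms(2) inv, symmetric])
  finally show ?thesis .
qed

lemma strong_exp_dichotomy_projection_bounded:
  fixes A P P' :: "nat \<Rightarrow> real^'d^'d" and N :: "nat \<Rightarrow> real^'d \<Rightarrow> real"
  assumes inv: "\<And>n. invertible (A n)" and nrm: "\<And>n. is_norm_on (N n)"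
    and "is_projection (P 0)" and "strong_exp_dichotomy A N P"
    and intertw': "\<And>n. A n ** P' n = P' (Suc n) ** A n"
    and "P 0 ** P' 0 = P' 0" and "P' 0 ** P 0 = P 0"
  obtains E where "E \<ge> 0" "\<And>n x. N n (P' n *v x) \<le> E * N n x"
proof -
  obtain K lam where intertw: "\<And>n. A n ** P n = P (Suc n) ** A n" and K: "K > 0" "lam > 0"
    and stable: "\<And>m n x. n \<le> m \<Longrightarrow>
      N m (cocycle A m n *v (P n *v x)) \<le> K * exp (- lam * real (m - n)) * N n x"
    and unstable: "\<And>m n x. n \<le> m \<Longrightarrow>
      N n (cocycle A n m *v ((mat 1 - P m) *v x)) \<le> K * exp (- lam * real (m - n)) * N m x"
    using strong_exp_dichotomyE[OF assms(4)] by metis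
  define D where "D = P' 0 - P 0"
  obtain C where C: "C \<ge> 0" "\<And>x. N 0 (D *v x) \<le> C * N 0 x"
    using is_norm_on_matrix_bounded[OF nrm] by metis
  have decay_le: "K * exp (- lam * real j) * t \<le> K * t" if "t \<ge> 0" for j t
    using K that by (simp add: mult_left_le_one_le)
  have D_factor: "D = P 0 ** D ** (mat 1 - P 0)"
    using assms(3,6,7) unfolding D_def is_projection_def
    by (simp add: matrix_mul_diff_ldistrib matrix_mul_diff_rdistrib matrix_mul_assoc)
  have diff_factor: "P' n - P n = cocycle A n 0 ** P 0 ** D ** cocycle A 0 n ** (mat 1 - P n)" for n
  proof -
    have "P' n - P n = cocycle A n 0 ** D ** cocycle A 0 n"
      unfolding D_def
      by (simp add: cocycle_conjugate[of A P', OF intertw' inv, of n 0]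
          cocycle_conjugate[of A P, OF intertw inv, of n 0]
          matrix_mul_diff_ldistrib matrix_mul_diff_rdistrib)
    also have "\<dots> = cocycle A n 0 ** P 0 ** D ** ((mat 1 - P 0) ** cocycle A 0 n)"
      by (subst D_factor) (simp add: matrix_mul_assoc)
    finally show ?thesis
      by (simp add: cocycle_intertwines_complement[of A P, OF intertw inv] matrix_mul_assoc)
  qed
  have diff_bound: "N n ((P' n - P n) *v x) \<le> K * C * K * N n x" for n x
  proof -
    let ?u = "cocycle A 0 n *v ((mat 1 - P n) *v x)"
    have "N n ((P' n - P n) *v x) = N n (cocycle A n 0 *v (P 0 *v (D *v ?u)))"
      by (simp add: diff_factor matrix_vector_mul_assoc matrix_mul_assoc)
    also have "\<dots> \<le> K * exp (- lam * real n) * N 0 (D *v ?u)" using stable[of 0 n] by simp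
    also have "\<dots> \<le> K * N 0 (D *v ?u)" by (rule decay_le[OF is_norm_on_nonneg[OF nrm]])
    also have "\<dots> \<le> K * (C * N 0 ?u)" using K C(2) by simp
    also have "\<dots> \<le> K * (C * (K * N n x))"
      using order_trans[OF unstable[of 0 n x, OF le0] decay_le[OF is_norm_on_nonneg[OF nrm]]] K C
      by (simp add: mult_left_mono)
    finally show ?thesis by (simp add: mult_ac)
  qed
  show ?thesis
  proof
    show "0 \<le> K + K * C * K" using K C by simp
    fix n x
    have "N n (P' n *v x) \<le> N n (P n *v x) + N n ((P' n - P n) *v x)"
      using is_norm_on_triangle[OF nrm, of n "P n *v x" "(P' n - P n) *v x"]
      by (simp add: matrix_vector_mult_diff_rdistrib)
    also have "\<dots> \<le> K * N n x + K * C * K * N n x"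
      using stable[of n n x] diff_bound[of n x] by simp
    finally show "N n (P' n *v x) \<le> (K + K * C * K) * N n x" by (simp add: algebra_simps)
  qed
qed

lemma strong_exp_dichotomy_change_projection:
  fixes A P P' :: "nat \<Rightarrow> real^'d^'d" and N :: "nat \<Rightarrow> real^'d \<Rightarrow> real"
  assumes inv: "\<And>n. invertible (A n)" and nrm: "\<And>n. is_norm_on (N n)"
    and "strong_exp_dichotomy A N P"
    and intertw': "\<And>n. A n ** P' n = P' (Suc n) ** A n"
    and P_P': "\<And>n. P n ** P' n = P' n" and P'_P: "\<And>n. P' n ** P n = P n"
    and "E \<ge> 0" and P'_bound: "\<And>n x. N n (P' n *v x) \<le> E * N n x"
  shows "strong_exp_dichotomy A N P'"
proof -
  obtain K a lam where K: "K > 0" "lam > 0" "a \<ge> lam"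
    and stable: "\<And>m n x. n \<le> m \<Longrightarrow>
      N m (cocycle A m n *v (P n *v x)) \<le> K * exp (- lam * real (m - n)) * N n x"
    and unstable: "\<And>m n x. n \<le> m \<Longrightarrow>
      N n (cocycle A n m *v ((mat 1 - P m) *v x)) \<le> K * exp (- lam * real (m - n)) * N m x"
    and forward: "\<And>m n x. n \<le> m \<Longrightarrow> N m (cocycle A m n *v x) \<le> K * exp (a * real (m - n)) * N n x"
    and backward: "\<And>m n x. n \<le> m \<Longrightarrow> N n (cocycle A n m *v x) \<le> K * exp (a * real (m - n)) * N m x"
    using strong_exp_dichotomyE[OF assms(3)] by metis
  have Q'_bound: "N n ((mat 1 - P' n) *v x) \<le> (1 + E) * N n x" for n x
    using is_norm_on_diff[OF nrm, of n x "P' n *v x"] P'_bound[of n x]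
    by (simp add: algebra_simps)
  have Q'_Q: "(mat 1 - P' n) ** (mat 1 - P n) = mat 1 - P' n" for n
    using P'_P[of n] by (simp add: matrix_mul_diff_ldistrib matrix_mul_diff_rdistrib)
  define K' where "K' = K * (1 + E)"
  have K': "K' > 0" "K \<le> K'" using K \<open>E \<ge> 0\<close> unfolding K'_def by auto
  have enlarge: "K * c * t \<le> K' * c * t" if "c \<ge> 0" "t \<ge> 0" for c t
    using K' that by (intro mult_right_mono) auto
  show ?thesis
    unfolding strong_exp_dichotomy_def
  proof (rule conjI[OF allI[OF intertw']], rule exI[of _ K'], rule exI[of _ a], rule exI[of _ lam],
      intro conjI allI impI)
    show "K' > 0" "lam > 0" "a \<ge> lam" using K K' by auto
  next
    fix m n :: nat and x :: "real^'d" assume "n \<le> m"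
    have "N m (cocycle A m n *v (P' n *v x)) = N m (cocycle A m n *v (P n *v (P' n *v x)))"
      by (simp add: matrix_vector_mul_assoc P_P')
    also have "\<dots> \<le> K * exp (- lam * real (m - n)) * N n (P' n *v x)"
      by (rule stable[OF \<open>n \<le> m\<close>])
    also have "\<dots> \<le> K * exp (- lam * real (m - n)) * (E * N n x)"
      using K by (intro mult_left_mono P'_bound) auto
    also have "\<dots> \<le> K' * exp (- lam * real (m - n)) * N n x"
      using K \<open>E \<ge> 0\<close> is_norm_on_nonneg[OF nrm]
      unfolding K'_def by (simp add: algebra_simps mult_right_mono)
    finally show "N m (cocycle A m n *v (P' n *v x)) \<le> K' * exp (- lam * real (m - n)) * N n x" .
  next
    fix m n :: nat and x :: "real^'d" assume "n \<le> m"
    have "cocycle A n m ** (mat 1 - P' m) = cocycle A n m ** (mat 1 - P' m) ** (mat 1 - P m)"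
      by (simp add: Q'_Q matrix_mul_assoc[symmetric])
    also have "\<dots> = (mat 1 - P' n) ** cocycle A n m ** (mat 1 - P m)"
      by (simp add: cocycle_intertwines_complement[of A P', OF intertw' inv])
    finally have "N n (cocycle A n m *v ((mat 1 - P' m) *v x))
        = N n ((mat 1 - P' n) *v (cocycle A n m *v ((mat 1 - P m) *v x)))"
      by (simp add: matrix_vector_mul_assoc matrix_mul_assoc)
    also have "\<dots> \<le> (1 + E) * N n (cocycle A n m *v ((mat 1 - P m) *v x))" by (rule Q'_bound)
    also have "\<dots> \<le> (1 + E) * (K * exp (- lam * real (m - n)) * N m x)"
      using \<open>E \<ge> 0\<close> by (intro mult_left_mono unstable[OF \<open>n \<le> m\<close>]) auto
    also have "\<dots> = K' * exp (- lam * real (m - n)) * N m x"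
      unfolding K'_def by (simp add: algebra_simps)
    finally show "N n (cocycle A n m *v ((mat 1 - P' m) *v x))
        \<le> K' * exp (- lam * real (m - n)) * N m x" .
  next
    fix m n :: nat and x :: "real^'d" assume "n \<le> m"
    show "N m (cocycle A m n *v x) \<le> K' * exp (a * real (m - n)) * N n x"
      using order_trans[OF forward[OF \<open>n \<le> m\<close>] enlarge] is_norm_on_nonneg[OF nrm] by simp
    show "N n (cocycle A n m *v x) \<le> K' * exp (a * real (m - n)) * N m x"
      using order_trans[OF backward[OF \<open>n \<le> m\<close>] enlarge] is_norm_on_nonneg[OF nrm] by simp
  qed
qed

theorem lemma7p2:
  fixes A P P' :: "nat \<Rightarrow> real^'d^'d" and N :: "nat \<Rightarrow> real^'d \<Rightarrow> real"
  assumes "\<And>n. invertible (A n)"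
    and "\<And>n. is_norm_on (N n)"
    and "\<And>n. is_projection (P n)"
    and "strong_exp_dichotomy A N P"
    and "\<And>n. is_projection (P' n)"
    and "\<And>n. P' (Suc n) ** A n = A n ** P' n"
  shows "strong_exp_dichotomy A N P' \<longleftrightarrow> range (\<lambda>x. P 0 *v x) = range (\<lambda>x. P' 0 *v x)"
proof
  assume "strong_exp_dichotomy A N P'"
  then show "range (\<lambda>x. P 0 *v x) = range (\<lambda>x. P' 0 *v x)"
    using strong_exp_dichotomy_range_subset assms(1,2,4) by blast
next
  assume range_eq: "range (\<lambda>x. P 0 *v x) = range (\<lambda>x. P' 0 *v x)"
  obtain intertw: "\<And>n. A n ** P n = P (Suc n) ** A n"
    using strong_exp_dichotomyE[OF assms(4)] by metis
  have intertw': "A n ** P' n = P' (Suc n) ** A n" for n by (simp add: assms(6))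
  have "P 0 ** P' 0 = P' 0" "P' 0 ** P 0 = P 0"
    using projection_mult_eq_if_range_subset[OF assms(3)] projection_mult_eq_if_range_subset[OF assms(5)]
      range_eq by simp_all
  then have "P n ** P' n = P' n" "P' n ** P n = P n" for n
    using cocycle_propagates_mult_eq[of A P P', OF intertw intertw' assms(1)]
      cocycle_propagates_mult_eq[of A P' P, OF intertw' intertw assms(1)] by simp_all
  moreover obtain E where "E \<ge> 0" "\<And>n x. N n (P' n *v x) \<le> E * N n x"
    using strong_exp_dichotomy_projection_bounded[OF assms(1,2,3,4) intertw']
      \<open>P 0 ** P' 0 = P' 0\<close> \<open>P' 0 ** P 0 = P 0\<close> by metis
  ultimately show "strong_exp_dichotomy A N P'"
    using strong_exp_dichotomy_change_projection[OF assms(1,2,4) intertw'] by metis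
qed

end
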